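(* Let $k=6$, $p\in\mathbb{S}^n$ ($n\ge2$), $R\in(0,\pi/2)$, $B_R=\{q:\mathbf{d}_p(q)\le R\}$, $y\in\partial B_R$, and $\gamma:[R,\pi]\to\mathbb{S}^n$ the unit-speed minimizing geodesic from $y$ to $-p$ with $\mathbf{d}_p(\gamma(s))=s$. Let $h,f_1,f_2$ be smooth functions on $(R,\pi)$. Then the identity \[-15\sin R\,\langle\Psi_{\gamma(s)},\nabla\mathbf{d}_p\rangle\big|_x\,h(s)-3\cos R\,h(s)=\frac{d}{ds}\sum_{i=1}^2\frac{f_i(s)\sin^4s}{(1-\cos\mathbf{d}_x(\gamma(s)))^i}\] holding for all $x\in\partial B_R\setminus\{y\}$ and $s\in(R,\pi)$ is equivalent to the conditions that $h(s)=f_2(s)\sin^3s$ and $\boldsymbol f=(f_1,f_2)$ solves the system $\boldsymbol f'=A\boldsymbol f$, where \[A=\frac{1}{\sin s}\begin{pmatrix}-3\cos s&3\cos s\\ \cos R-\cos s&\cos s-\cos R\end{pmatrix}.\]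
   Context: $\mathbb{S}^n$ is the unit round sphere with Levi-Civita connection $\nabla$; $\mathbf{d}_q$ is geodesic distance from $q$. With $k=6$: $I_k(r)=\int_0^r\sin^{k-1}s\,ds$, $\varphi(t)=I_k(t)\sin^{1-k}t$ for $t\in(0,\pi)$, $\varphi(0)=0$, $\Phi_q=(\varphi\circ\mathbf{d}_q)\nabla\mathbf{d}_q$ on $\mathbb{S}^n\setminus\{-q\}$, and $\Psi_q:=\Phi_{-q}$ on $\mathbb{S}^n\setminus\{q\}$. *)

theory Defs
  imports "HOL-Analysis.Analysis"
begin

text \<open>The unit sphere S^n is modelled as sphere 0 1 in a Euclidean space 'a
  with DIM('a) = n+1.\<close>

definition sdist :: "'a::euclidean_space \<Rightarrow> 'a \<Rightarrow> real" where
  "sdist q x = arccos (q \<bullet> x)"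

text \<open>Riemannian gradient of d_q at x (for x different from q and -q): the
  tangential projection of the Euclidean gradient of arccos (q . x), i.e.
  -(q - (q . x) x) / sin (d_q x).\<close>
definition grad_d :: "'a::euclidean_space \<Rightarrow> 'a \<Rightarrow> 'a" where
  "grad_d q x = (- 1 / sin (sdist q x)) *\<^sub>R (q - (q \<bullet> x) *\<^sub>R x)"

definition I6 :: "real \<Rightarrow> real" where
  "I6 r = integral {0..r} (\<lambda>s. sin s ^ 5)"

definition phi6 :: "real \<Rightarrow> real" where
  "phi6 t = (if t = 0 then 0 else I6 t / sin t ^ 5)"

text \<open>Phi_q = (phi o d_q) grad d_q on S^n minus {-q}; at x = q it is 0 since phi 0 = 0.\<close>
definition Phi6 :: "'a::euclidean_space \<Rightarrow> 'a \<Rightarrow> 'a" where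
  "Phi6 q x = (if sdist q x = 0 then 0 else phi6 (sdist q x) *\<^sub>R grad_d q x)"

definition Psi6 :: "'a::euclidean_space \<Rightarrow> 'a \<Rightarrow> 'a" where
  "Psi6 q x = Phi6 (- q) x"

definition smooth_on :: "real set \<Rightarrow> (real \<Rightarrow> real) \<Rightarrow> bool" where
  "smooth_on S f \<longleftrightarrow>
     (\<forall>k. \<forall>x\<in>S. ((deriv ^^ k) f has_real_derivative (deriv ^^ Suc k) f x) (at x))"

end

theory Submission
  imports Defs
begin

(* Since d_p(gamma s) = s and gamma is a unit-speed geodesic from y, gamma(t) = cos t p + sin t e
   with e a unit vector orthogonal to p.  For x on the boundary sphere put c = x . gamma(s)
   = cos d_x(gamma s).  The closed form 15 I_6(u) = (1 - cos u)^3 (8 + 9 cos u + 3 cos^2 u)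
   turns the left-hand side of the identity into a rational function of c with denominator
   (1 - c)^3, and so is the derivative on the right, because sin s (d/ds) c = cos s c - cos R.
   Clearing denominators, the identity at (x, s) says that a quadratic polynomial in c vanishes.
   When n >= 2, c takes at least three values as x runs through the boundary minus y, so the
   identity holds for all such x iff the polynomial vanishes identically;
   evaluating it at c = 1, 0, -1 gives h = f_2 sin^3 and the linear system f' = A f. *)

lemma inner_unit_bounds:
  fixes q x :: "'a::euclidean_space"
  assumes "norm q = 1" "norm x = 1"
  shows "-1 \<le> q \<bullet> x" "q \<bullet> x \<le> 1"
  using Cauchy_Schwarz_ineq2[of q x] assms by (auto simp: abs_le_iff)

lemma cos_sdist:
  fixes q x :: "'a::euclidean_space"
  assumes "norm q = 1" "norm x = 1"
  shows "cos (sdist q x) = q \<bullet> x"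
  using inner_unit_bounds[OF assms] by (simp add: sdist_def cos_arccos)

lemma sdist_eq_iff_inner:
  fixes q x :: "'a::euclidean_space"
  assumes "norm q = 1" "norm x = 1" "0 \<le> r" "r \<le> pi"
  shows "sdist q x = r \<longleftrightarrow> q \<bullet> x = cos r"
  using inner_unit_bounds[OF assms(1,2)] assms(3,4)
  by (auto simp: sdist_def cos_arccos arccos_cos)

lemma unit_inner_eq_1_imp_eq:
  fixes x z :: "'a::real_inner"
  assumes "norm x = 1" "norm z = 1" "x \<bullet> z = 1"
  shows "x = z"
proof -
  have "(x - z) \<bullet> (x - z) = 0"
    using assms by (simp add: norm_eq_1 inner_diff_left inner_diff_right inner_commute)
  then show ?thesis
    by simp
qed

lemma exists_unit_orthogonal_to_two:
  fixes u v :: "'a::euclidean_space"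
  assumes "DIM('a) \<ge> 3"
  obtains z where "norm z = 1" "u \<bullet> z = 0" "v \<bullet> z = 0"
proof -
  have "dim {u, v} \<le> card {u, v}"
    by (rule dim_le_card') simp
  also have "\<dots> \<le> 2"
    by (simp add: card_insert_le_m1)
  also have "\<dots> < DIM('a)"
    using assms by simp
  finally obtain z where "z \<noteq> 0" "\<And>w. w \<in> span {u, v} \<Longrightarrow> orthogonal z w"
    using orthogonal_to_subspace_exists by blast
  then show thesis
    by (intro that[of "z /\<^sub>R norm z"]) (auto simp: orthogonal_def span_base inner_commute)
qed

lemma exists_unit_with_inner_orthonormal:
  fixes p e :: "'a::euclidean_space"
  assumes "DIM('a) \<ge> 3" "norm p = 1" "norm e = 1" "p \<bullet> e = 0" "a\<^sup>2 + b\<^sup>2 \<le> 1"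
  obtains x where "norm x = 1" "p \<bullet> x = a" "e \<bullet> x = b"
proof -
  obtain z where z: "norm z = 1" "p \<bullet> z = 0" "e \<bullet> z = 0"
    using exists_unit_orthogonal_to_two assms(1) by blast
  define x where "x = a *\<^sub>R p + b *\<^sub>R e + sqrt (1 - a\<^sup>2 - b\<^sup>2) *\<^sub>R z"
  have "x \<bullet> x = a\<^sup>2 + b\<^sup>2 + (sqrt (1 - a\<^sup>2 - b\<^sup>2))\<^sup>2"
    using assms(2-4) z unfolding x_def
    by (simp add: norm_eq_1 inner_add_left inner_add_right inner_commute power2_eq_square)
  with assms(5) have "norm x = 1"
    by (simp add: norm_eq_1)
  moreover have "p \<bullet> x = a" "e \<bullet> x = b"
    using assms(2-4) z unfolding x_def
    by (simp_all add: norm_eq_1 inner_add_right inner_commute)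
  ultimately show thesis
    by (rule that)
qed

lemma geodesic_eq_cos_sin:
  fixes p :: "'a::euclidean_space" and \<gamma> :: "real \<Rightarrow> 'a"
  assumes p: "norm p = 1" and R: "0 < R" "R < pi"
    and \<gamma>_sphere: "\<gamma> ` {R..pi} \<subseteq> sphere 0 1"
    and \<gamma>_geod: "\<forall>s\<in>{R..pi}. \<forall>t\<in>{R..pi}. sdist (\<gamma> s) (\<gamma> t) = \<bar>s - t\<bar>"
    and \<gamma>_dist: "\<forall>s\<in>{R..pi}. sdist p (\<gamma> s) = s"
  obtains e where "norm e = 1" "p \<bullet> e = 0" "\<forall>t\<in>{R..pi}. \<gamma> t = cos t *\<^sub>R p + sin t *\<^sub>R e"
proof
  have unit: "norm (\<gamma> t) = 1" if "t \<in> {R..pi}" for t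
    using \<gamma>_sphere that by (auto simp: image_subset_iff)
  have p_\<gamma>: "p \<bullet> \<gamma> t = cos t" if "t \<in> {R..pi}" for t
    using sdist_eq_iff_inner[OF p unit[OF that], of t] \<gamma>_dist that R by auto
  have "sin R > 0"
    using R by (simp add: sin_gt_zero)
  define e where "e = (1 / sin R) *\<^sub>R (\<gamma> R - cos R *\<^sub>R p)"
  have "R \<in> {R..pi}"
    using R by simp
  have e_\<gamma>: "e \<bullet> \<gamma> t = sin t" if "t \<in> {R..pi}" for t
  proof -
    have "sdist (\<gamma> R) (\<gamma> t) = t - R"
      using \<gamma>_geod that R by fastforce
    then have "\<gamma> R \<bullet> \<gamma> t = cos (t - R)"
      using sdist_eq_iff_inner[OF unit[OF \<open>R \<in> {R..pi}\<close>] unit[OF that], of "t - R"] that R by simp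
    then show ?thesis
      using p_\<gamma>[OF that] \<open>sin R > 0\<close>
      by (simp add: e_def inner_diff_left cos_diff field_simps)
  qed
  show "p \<bullet> e = 0"
    using p p_\<gamma>[OF \<open>R \<in> {R..pi}\<close>] by (simp add: e_def inner_diff_right norm_eq_1 inner_commute)
  moreover have "e \<bullet> e = 1"
  proof -
    have "e \<bullet> e = (1 / sin R) * ((\<gamma> R - cos R *\<^sub>R p) \<bullet> e)"
      by (subst (1) e_def) (simp only: inner_scaleR_left)
    then show ?thesis
      using e_\<gamma>[OF \<open>R \<in> {R..pi}\<close>] \<open>p \<bullet> e = 0\<close> \<open>sin R > 0\<close>
      by (simp add: inner_diff_left inner_diff_right inner_commute)
  qed
  then show "norm e = 1"
    by (simp add: norm_eq_1)
  show "\<forall>t\<in>{R..pi}. \<gamma> t = cos t *\<^sub>R p + sin t *\<^sub>R e"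
  proof
    fix t assume t: "t \<in> {R..pi}"
    have "(\<gamma> t - (cos t *\<^sub>R p + sin t *\<^sub>R e)) \<bullet> (\<gamma> t - (cos t *\<^sub>R p + sin t *\<^sub>R e))
        = 1 - ((cos t)\<^sup>2 + (sin t)\<^sup>2)"
      using unit[OF t] p_\<gamma>[OF t] e_\<gamma>[OF t] p \<open>p \<bullet> e = 0\<close> \<open>e \<bullet> e = 1\<close>
      by (simp add: norm_eq_1 inner_diff_left inner_diff_right inner_add_left inner_add_right
          inner_commute power2_eq_square algebra_simps)
    then show "\<gamma> t = cos t *\<^sub>R p + sin t *\<^sub>R e"
      by simp
  qed
qed

lemma I6_closed_form:
  assumes "0 \<le> u"
  shows "15 * I6 u = (1 - cos u) ^ 3 * (8 + 9 * cos u + 3 * (cos u)\<^sup>2)"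
proof -
  define F where "F t = - cos t + 2/3 * cos t ^ 3 - 1/5 * cos t ^ 5" for t :: real
  have "(F has_real_derivative sin t ^ 5) (at t)" for t
  proof -
    have "sin t ^ 5 = sin t * (1 - (cos t)\<^sup>2)\<^sup>2"
      by (simp add: sin_squared_eq[symmetric] flip: power_mult power_Suc)
    then show ?thesis
      unfolding F_def
      by (auto intro!: derivative_eq_intros simp: algebra_simps power2_eq_square power4_eq_xxxx)
  qed
  then have "((\<lambda>s. sin s ^ 5) has_integral (F u - F 0)) {0..u}"
    by (intro fundamental_theorem_of_calculus[OF assms])
      (auto intro: has_field_derivative_at_within
        simp: has_real_derivative_iff_has_vector_derivative[symmetric])
  then have "I6 u = F u - F 0"
    by (simp add: I6_def integral_unique)
  then show ?thesis
    by (simp add: F_def algebra_simps power2_eq_square power3_eq_cube eval_nat_numeral)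
qed

lemma inner_grad_d:
  fixes q q' x :: "'a::euclidean_space"
  assumes "norm x = 1"
  shows "grad_d q x \<bullet> grad_d q' x
    = (q \<bullet> q' - (q \<bullet> x) * (q' \<bullet> x)) / (sin (sdist q x) * sin (sdist q' x))"
proof -
  have "(q - (q \<bullet> x) *\<^sub>R x) \<bullet> (q' - (q' \<bullet> x) *\<^sub>R x) = q \<bullet> q' - (q \<bullet> x) * (q' \<bullet> x)"
    using assms by (simp add: norm_eq_1 inner_diff_left inner_diff_right inner_commute)
  then show ?thesis
    by (simp add: grad_d_def)
qed

lemma Psi6_inner_grad_d:
  fixes p g x :: "'a::euclidean_space"
  assumes unit: "norm p = 1" "norm g = 1" "norm x = 1"
    and R: "0 < R" "R < pi" "p \<bullet> x = cos R"
    and c: "x \<bullet> g = c" "c \<noteq> 1"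
  shows "15 * sin R * (Psi6 g x \<bullet> grad_d p x)
    = (3 * c\<^sup>2 - 9 * c + 8) * (c * cos R - p \<bullet> g) / (1 - c) ^ 3"
proof (cases "c = -1")
  case True
  \<comment> \<open>x = -g, where Psi6 g vanishes by the convention phi6 0 = 0\<close>
  then have "x = - g"
    using unit c unit_inner_eq_1_imp_eq[of x "- g"] by simp
  then show ?thesis
    using True R(3) unit(2) by (simp add: Psi6_def Phi6_def sdist_def norm_eq_1)
next
  case False
  have "sin R > 0"
    using R by (simp add: sin_gt_zero)
  define u where "u = sdist (- g) x"
  have "norm (- g) = 1"
    using unit by simp
  then have cos_u: "cos u = - c" and u: "0 \<le> u" "u \<le> pi"
    using cos_sdist[of "- g" x] inner_unit_bounds[of "- g" x] unit c
    by (auto simp: u_def sdist_def inner_commute intro: arccos_lbound arccos_ubound)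
  with False c(2) have "u \<noteq> 0" "sin u > 0"
    by (auto intro!: sin_gt_zero simp: order_le_less)
  have "sin u ^ 6 = ((sin u)\<^sup>2) ^ 3"
    by (simp flip: power_mult)
  also have "\<dots> = (1 - c\<^sup>2) ^ 3"
    using sin_squared_eq[of u] cos_u by simp
  also have "\<dots> = (1 - c) ^ 3 * (1 + c) ^ 3"
    by (simp add: algebra_simps eval_nat_numeral)
  finally have sin_u6: "sin u ^ 6 = (1 - c) ^ 3 * (1 + c) ^ 3" .
  have I6_u: "15 * I6 u = (1 + c) ^ 3 * (3 * c\<^sup>2 - 9 * c + 8)"
    using I6_closed_form[OF u(1)] cos_u by (simp add: algebra_simps)
  have "sdist p x = R"
    using sdist_eq_iff_inner[OF unit(1,3)] R by simp
  then have grad: "grad_d (- g) x \<bullet> grad_d p x = (c * cos R - p \<bullet> g) / (sin u * sin R)"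
    using unit(3) R(3) c(1) by (simp add: inner_grad_d u_def[symmetric] inner_commute mult.commute)
  have Psi: "Psi6 g x = (I6 u / sin u ^ 5) *\<^sub>R grad_d (- g) x"
    using \<open>u \<noteq> 0\<close> by (simp add: Psi6_def Phi6_def phi6_def u_def)
  have "15 * sin R * (Psi6 g x \<bullet> grad_d p x) = 15 * I6 u * (c * cos R - p \<bullet> g) / sin u ^ 6"
    unfolding Psi inner_scaleR_left grad
    using \<open>sin u > 0\<close> \<open>sin R > 0\<close> by (simp add: field_simps eval_nat_numeral)
  also have "\<dots> = (3 * c\<^sup>2 - 9 * c + 8) * (c * cos R - p \<bullet> g) / (1 - c) ^ 3"
    using False c(2) unfolding I6_u sin_u6 by (simp add: field_simps)
  finally show ?thesis .
qed

lemma has_real_derivative_sin4_quotients: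
  fixes f1 f2 :: "real \<Rightarrow> real"
  assumes f: "(f1 has_real_derivative D1) (at s)" "(f2 has_real_derivative D2) (at s)"
    and c: "c = cos s * C + sin s * a" "c \<noteq> 1"
  shows "((\<lambda>t. f1 t * sin t ^ 4 / (1 - (cos t * C + sin t * a)) ^ 1
              + f2 t * sin t ^ 4 / (1 - (cos t * C + sin t * a)) ^ 2)
    has_real_derivative sin s ^ 3 * ((D1 * sin s + 4 * f1 s * cos s) * (1 - c)\<^sup>2
        + f1 s * (cos s * c - C) * (1 - c) + (D2 * sin s + 4 * f2 s * cos s) * (1 - c)
        + 2 * f2 s * (cos s * c - C)) / (1 - c) ^ 3) (at s)"
proof -
  define q where "q t = 1 - (cos t * C + sin t * a)" for t
  define c' where "c' = cos s * a - sin s * C"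
  define d where "d = 1 - c"
  have "d \<noteq> 0"
    using c(2) by (simp add: d_def)
  have q: "(q has_real_derivative - c') (at s)" "q s = d"
    unfolding q_def c'_def d_def c(1) by (auto intro!: derivative_eq_intros)
  have "cos s * c - C = sin s * c'"
    unfolding c'_def using c(1) sin_cos_squared_add[of s] by algebra
  then have "sin s ^ 3 * ((D1 * sin s + 4 * f1 s * cos s) * (1 - c)\<^sup>2
        + f1 s * (cos s * c - C) * (1 - c) + (D2 * sin s + 4 * f2 s * cos s) * (1 - c)
        + 2 * f2 s * (cos s * c - C)) / (1 - c) ^ 3
      = (D1 * sin s ^ 4 + f1 s * (4 * sin s ^ 3 * cos s)) / d + f1 s * sin s ^ 4 * c' / d\<^sup>2
        + (D2 * sin s ^ 4 + f2 s * (4 * sin s ^ 3 * cos s)) / d\<^sup>2 + 2 * f2 s * sin s ^ 4 * c' / d ^ 3"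
    using \<open>d \<noteq> 0\<close> unfolding d_def[symmetric] by (simp add: field_simps eval_nat_numeral)
  moreover have "((\<lambda>t. f1 t * sin t ^ 4 / q t ^ 1 + f2 t * sin t ^ 4 / q t ^ 2) has_real_derivative
      (D1 * sin s ^ 4 + f1 s * (4 * sin s ^ 3 * cos s)) / d + f1 s * sin s ^ 4 * c' / d\<^sup>2
        + (D2 * sin s ^ 4 + f2 s * (4 * sin s ^ 3 * cos s)) / d\<^sup>2 + 2 * f2 s * sin s ^ 4 * c' / d ^ 3) (at s)"
    using \<open>d \<noteq> 0\<close> by (auto intro!: derivative_eq_intros f q simp: q(2) field_simps eval_nat_numeral)
  ultimately show ?thesis
    by (simp add: q_def)
qed

lemma quadratic_eq_0_if_three_roots:
  fixes a b c x y z :: "'a::idom"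
  assumes "a + b * x + c * x\<^sup>2 = 0" "a + b * y + c * y\<^sup>2 = 0" "a + b * z + c * z\<^sup>2 = 0"
    and "x \<noteq> y" "x \<noteq> z" "y \<noteq> z"
  shows "a = 0 \<and> b = 0 \<and> c = 0"
proof -
  have "(x - y) * (b + c * (x + y)) = 0" "(x - z) * (b + c * (x + z)) = 0"
    using assms(1-3) by algebra+
  with assms(4,5) have "b + c * (x + y) = 0" "b + c * (x + z) = 0"
    by simp_all
  then have "c * (y - z) = 0"
    by algebra
  with assms(6) have "c = 0"
    by simp
  with assms(1) \<open>b + c * (x + y) = 0\<close> show ?thesis
    by simp
qed

(* (1 - c)^3 times the difference of the two sides of the identity, with w = sin s, k = cos s,
   C = cos R, c = x . gamma(s), F_i = f_i s, D_i = f_i' s and H = h s. *)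
definition residual :: "real \<Rightarrow> real \<Rightarrow> real \<Rightarrow> real \<Rightarrow> real \<Rightarrow> real \<Rightarrow> real \<Rightarrow> real \<Rightarrow> real \<Rightarrow> real"
  where "residual w k C F1 F2 D1 D2 H c =
    w ^ 3 * ((D1 * w + 4 * F1 * k) * (1 - c)\<^sup>2 + F1 * (k * c - C) * (1 - c)
      + (D2 * w + 4 * F2 * k) * (1 - c) + 2 * F2 * (k * c - C))
    + H * ((3 * c\<^sup>2 - 9 * c + 8) * (c * C - k) + 3 * C * (1 - c) ^ 3)"

lemma residual_eq_0_if_three_roots:
  assumes "residual w k C F1 F2 D1 D2 H c1 = 0" "residual w k C F1 F2 D1 D2 H c2 = 0"
    "residual w k C F1 F2 D1 D2 H c3 = 0" "c1 \<noteq> c2" "c1 \<noteq> c3" "c2 \<noteq> c3"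
  shows "residual w k C F1 F2 D1 D2 H c = 0"
proof -
  define A0 where "A0 = w ^ 3 * (D1 * w + 4 * F1 * k - F1 * C + D2 * w + 4 * F2 * k - 2 * F2 * C)
    + H * (3 * C - 8 * k)"
  define A1 where "A1 = w ^ 3 * (- 2 * D1 * w - 7 * F1 * k + F1 * C - D2 * w - 2 * F2 * k)
    + H * (9 * k - C)"
  define A2 where "A2 = w ^ 3 * (D1 * w + 3 * F1 * k) - 3 * k * H"
  have expand: "residual w k C F1 F2 D1 D2 H x = A0 + A1 * x + A2 * x\<^sup>2" for x
    unfolding residual_def A0_def A1_def A2_def
    by (simp add: algebra_simps power2_eq_square power3_eq_cube)
  have "A0 = 0 \<and> A1 = 0 \<and> A2 = 0"
    using assms by (intro quadratic_eq_0_if_three_roots[where x = c1 and y = c2 and z = c3]) (simp_all add: expand)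
  then show ?thesis
    by (simp add: expand)
qed

lemma residual_eq_0_iff_ode:
  assumes "w \<noteq> 0" "k \<noteq> C"
  shows "(\<forall>c. residual w k C F1 F2 D1 D2 H c = 0) \<longleftrightarrow>
    H = F2 * w ^ 3 \<and> D1 = (- 3 * k * F1 + 3 * k * F2) / w
      \<and> D2 = ((C - k) * F1 + (k - C) * F2) / w"
proof
  assume vanish: "\<forall>c. residual w k C F1 F2 D1 D2 H c = 0"
  have "2 * (k - C) * (F2 * w ^ 3 - H) = 0"
    using vanish[rule_format, of 1] by (simp add: residual_def algebra_simps)
  with assms(2) have H: "H = F2 * w ^ 3"
    by simp
  have "w ^ 3 * (D1 * w + D2 * w + 4 * F1 * k - F1 * C - 4 * F2 * k + F2 * C) = 0"
    "w ^ 3 * (2 * D1 * w + D2 * w + 7 * F1 * k - F1 * C - 7 * F2 * k + F2 * C) = 0"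
    using vanish[rule_format, of 0] vanish[rule_format, of "-1"]
    by (simp_all add: residual_def H algebra_simps)
  with assms(1) have "D1 * w + D2 * w + 4 * F1 * k - F1 * C - 4 * F2 * k + F2 * C = 0"
    "2 * D1 * w + D2 * w + 7 * F1 * k - F1 * C - 7 * F2 * k + F2 * C = 0"
    by simp_all
  then have "D1 * w = - 3 * k * F1 + 3 * k * F2" "D2 * w = (C - k) * F1 + (k - C) * F2"
    by algebra+
  with assms(1) show "H = F2 * w ^ 3 \<and> D1 = (- 3 * k * F1 + 3 * k * F2) / w
      \<and> D2 = ((C - k) * F1 + (k - C) * F2) / w"
    by (simp add: H field_simps)
next
  assume "H = F2 * w ^ 3 \<and> D1 = (- 3 * k * F1 + 3 * k * F2) / w
      \<and> D2 = ((C - k) * F1 + (k - C) * F2) / w"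
  with assms(1) have "H = F2 * w ^ 3" "D1 * w = - 3 * k * F1 + 3 * k * F2"
    "D2 * w = (C - k) * F1 + (k - C) * F2"
    by simp_all
  then show "\<forall>c. residual w k C F1 F2 D1 D2 H c = 0"
    unfolding residual_def by algebra
qed

lemma has_derivative_identity_iff_residual_eq_0:
  fixes p e x :: "'a::euclidean_space" and \<gamma> :: "real \<Rightarrow> 'a"
  assumes pe: "norm p = 1" "norm e = 1" "p \<bullet> e = 0" and R: "0 < R" "R < pi"
    and \<gamma>: "\<forall>t\<in>{R<..<pi}. \<gamma> t = cos t *\<^sub>R p + sin t *\<^sub>R e"
    and x: "norm x = 1" "p \<bullet> x = cos R"
    and s: "s \<in> {R<..<pi}"
    and f: "(f1 has_real_derivative D1) (at s)" "(f2 has_real_derivative D2) (at s)"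
  shows "((\<lambda>t. f1 t * sin t ^ 4 / (1 - cos (sdist x (\<gamma> t))) ^ 1
              + f2 t * sin t ^ 4 / (1 - cos (sdist x (\<gamma> t))) ^ 2)
          has_real_derivative (- 15 * sin R * (Psi6 (\<gamma> s) x \<bullet> grad_d p x) * H - 3 * cos R * H)) (at s)
    \<longleftrightarrow> residual (sin s) (cos s) (cos R) (f1 s) (f2 s) D1 D2 H (x \<bullet> \<gamma> s) = 0"
    (is "(?G has_real_derivative ?L) (at s) \<longleftrightarrow> _")
proof -
  have unit_\<gamma>: "norm (\<gamma> t) = 1" and x_\<gamma>: "x \<bullet> \<gamma> t = cos t * cos R + sin t * (e \<bullet> x)"
    if "t \<in> {R<..<pi}" for t
    using \<gamma> that pe x(2)
    by (simp_all add: norm_eq_1 inner_add_left inner_add_right inner_commute)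
  define c where "c = x \<bullet> \<gamma> s"
  have p_\<gamma>: "p \<bullet> \<gamma> s = cos s"
    using \<gamma> s pe by (simp add: norm_eq_1 inner_add_right)
  have "c \<noteq> 1"
  proof
    assume "c = 1"
    then have "x = \<gamma> s"
      using unit_inner_eq_1_imp_eq[OF x(1) unit_\<gamma>[OF s]] by (simp add: c_def)
    then have "cos s = cos R"
      using p_\<gamma> x(2) by simp
    then show False
      using cos_inj_pi[of s R] s R by auto
  qed
  define N where "N = sin s ^ 3 * ((D1 * sin s + 4 * f1 s * cos s) * (1 - c)\<^sup>2
    + f1 s * (cos s * c - cos R) * (1 - c) + (D2 * sin s + 4 * f2 s * cos s) * (1 - c)
    + 2 * f2 s * (cos s * c - cos R))"
  have G': "(?G has_real_derivative N / (1 - c) ^ 3) (at s)"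
  proof (rule has_field_derivative_transform_within_open[OF _ open_greaterThanLessThan s])
    show "((\<lambda>t. f1 t * sin t ^ 4 / (1 - (cos t * cos R + sin t * (e \<bullet> x))) ^ 1
              + f2 t * sin t ^ 4 / (1 - (cos t * cos R + sin t * (e \<bullet> x))) ^ 2)
        has_real_derivative N / (1 - c) ^ 3) (at s)"
      unfolding N_def using \<open>c \<noteq> 1\<close> x_\<gamma>[OF s]
      by (intro has_real_derivative_sin4_quotients f) (simp_all add: c_def)
  next
    fix t assume "t \<in> {R<..<pi}"
    then have "cos (sdist x (\<gamma> t)) = cos t * cos R + sin t * (e \<bullet> x)"
      using cos_sdist[OF x(1) unit_\<gamma>] x_\<gamma> by simp
    then show "f1 t * sin t ^ 4 / (1 - (cos t * cos R + sin t * (e \<bullet> x))) ^ 1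
        + f2 t * sin t ^ 4 / (1 - (cos t * cos R + sin t * (e \<bullet> x))) ^ 2 = ?G t"
      by simp
  qed
  have "?L = - (15 * sin R * (Psi6 (\<gamma> s) x \<bullet> grad_d p x)) * H - 3 * cos R * H"
    by simp
  also have "\<dots> = - ((3 * c\<^sup>2 - 9 * c + 8) * (c * cos R - cos s) / (1 - c) ^ 3) * H - 3 * cos R * H"
    using Psi6_inner_grad_d[OF pe(1) unit_\<gamma>[OF s] x(1) R x(2) c_def[symmetric] \<open>c \<noteq> 1\<close>] p_\<gamma>
    by simp
  finally have L: "?L = - ((3 * c\<^sup>2 - 9 * c + 8) * (c * cos R - cos s) / (1 - c) ^ 3) * H - 3 * cos R * H" .
  have "residual (sin s) (cos s) (cos R) (f1 s) (f2 s) D1 D2 H c = 0 \<longleftrightarrow> N / (1 - c) ^ 3 = ?L"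
    unfolding L using \<open>c \<noteq> 1\<close> by (simp add: residual_def N_def field_simps)
  then show ?thesis
    using G' DERIV_unique by (auto simp: c_def)
qed

lemma residual_eq_0_if_eq_0_on_boundary:
  fixes p e :: "'a::euclidean_space"
  assumes dim: "DIM('a) \<ge> 3" and pe: "norm p = 1" "norm e = 1" "p \<bullet> e = 0"
    and R: "0 < R" "R < pi" and s: "0 < s" "s < pi"
    and vanish: "\<forall>x. norm x = 1 \<longrightarrow> p \<bullet> x = cos R \<longrightarrow> x \<noteq> cos R *\<^sub>R p + sin R *\<^sub>R e \<longrightarrow>
      residual w k C F1 F2 D1 D2 H (x \<bullet> (cos s *\<^sub>R p + sin s *\<^sub>R e)) = 0"
  shows "residual w k C F1 F2 D1 D2 H c = 0"
proof -
  have "sin R > 0" "sin s > 0"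
    using R s by (simp_all add: sin_gt_zero)
  have root: "residual w k C F1 F2 D1 D2 H (cos s * cos R + sin s * sin R * \<alpha>) = 0"
    if "\<bar>\<alpha>\<bar> \<le> 1" "\<alpha> \<noteq> 1" for \<alpha>
  proof -
    have "\<alpha>\<^sup>2 \<le> 1"
      using that(1) by (simp add: abs_square_le_1)
    then have "(sin R)\<^sup>2 * \<alpha>\<^sup>2 \<le> (sin R)\<^sup>2"
      by (simp add: mult_left_le)
    then have "(cos R)\<^sup>2 + (sin R * \<alpha>)\<^sup>2 \<le> 1"
      using sin_cos_squared_add[of R] by (simp add: power_mult_distrib del: sin_cos_squared_add)
    then obtain x where x: "norm x = 1" "p \<bullet> x = cos R" "e \<bullet> x = sin R * \<alpha>"
      using exists_unit_with_inner_orthonormal[OF dim pe] by blast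
    have "e \<bullet> (cos R *\<^sub>R p + sin R *\<^sub>R e) = sin R"
      using pe by (simp add: inner_add_right inner_commute norm_eq_1)
    then have "x \<noteq> cos R *\<^sub>R p + sin R *\<^sub>R e"
      using x(3) that(2) \<open>sin R > 0\<close> by auto
    moreover have "x \<bullet> (cos s *\<^sub>R p + sin s *\<^sub>R e) = cos s * cos R + sin s * sin R * \<alpha>"
      using x by (simp add: inner_add_right inner_commute)
    ultimately show ?thesis
      using vanish x(1,2) by metis
  qed
  with \<open>sin s > 0\<close> \<open>sin R > 0\<close> show ?thesis
    by (intro residual_eq_0_if_three_roots[OF root[of "-1"] root[of 0] root[of "1/2"]]) simp_all
qed

lemma identity_on_boundary_iff_residual_eq_0:
  fixes p e y :: "'a::euclidean_space" and \<gamma> :: "real \<Rightarrow> 'a"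
  assumes dim: "DIM('a) \<ge> 3" and pe: "norm p = 1" "norm e = 1" "p \<bullet> e = 0"
    and R: "0 < R" "R < pi" and y: "y = cos R *\<^sub>R p + sin R *\<^sub>R e"
    and \<gamma>: "\<forall>t\<in>{R<..<pi}. \<gamma> t = cos t *\<^sub>R p + sin t *\<^sub>R e"
    and s: "s \<in> {R<..<pi}"
    and f: "(f1 has_real_derivative D1) (at s)" "(f2 has_real_derivative D2) (at s)"
  shows "(\<forall>x\<in>sphere 0 1. sdist p x = R \<longrightarrow> x \<noteq> y \<longrightarrow>
            ((\<lambda>t. f1 t * sin t ^ 4 / (1 - cos (sdist x (\<gamma> t))) ^ 1
                   + f2 t * sin t ^ 4 / (1 - cos (sdist x (\<gamma> t))) ^ 2)
             has_real_derivative (- 15 * sin R * (Psi6 (\<gamma> s) x \<bullet> grad_d p x) * H - 3 * cos R * H)) (at s))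
    \<longleftrightarrow> (\<forall>c. residual (sin s) (cos s) (cos R) (f1 s) (f2 s) D1 D2 H c = 0)"
    (is "(\<forall>x\<in>sphere 0 1. sdist p x = R \<longrightarrow> x \<noteq> y \<longrightarrow> ?identity x) \<longleftrightarrow> _")
proof -
  have pointwise: "(?identity x) \<longleftrightarrow> residual (sin s) (cos s) (cos R) (f1 s) (f2 s) D1 D2 H (x \<bullet> \<gamma> s) = 0"
    if "x \<in> sphere 0 1" "sdist p x = R" for x
    using that sdist_eq_iff_inner[OF pe(1), of x R] R
    by (intro has_derivative_identity_iff_residual_eq_0[OF pe R \<gamma> _ _ s f]) auto
  show ?thesis
  proof
    assume identity: "\<forall>x\<in>sphere 0 1. sdist p x = R \<longrightarrow> x \<noteq> y \<longrightarrow> ?identity x"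
    have "0 < s" "s < pi" and \<gamma>_s: "\<gamma> s = cos s *\<^sub>R p + sin s *\<^sub>R e"
      using \<gamma> s R by auto
    show "\<forall>c. residual (sin s) (cos s) (cos R) (f1 s) (f2 s) D1 D2 H c = 0"
    proof (intro allI, rule residual_eq_0_if_eq_0_on_boundary[OF dim pe R \<open>0 < s\<close> \<open>s < pi\<close>],
        intro allI impI)
      fix x assume x: "norm x = 1" "p \<bullet> x = cos R" "x \<noteq> cos R *\<^sub>R p + sin R *\<^sub>R e"
      then have "x \<in> sphere 0 1" "sdist p x = R"
        using sdist_eq_iff_inner[OF pe(1), of x R] R by auto
      moreover have "x \<noteq> y"
        using x(3) y by simp
      ultimately have "?identity x"
        using identity by blast
      with pointwise[OF \<open>x \<in> sphere 0 1\<close> \<open>sdist p x = R\<close>] show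
        "residual (sin s) (cos s) (cos R) (f1 s) (f2 s) D1 D2 H (x \<bullet> (cos s *\<^sub>R p + sin s *\<^sub>R e)) = 0"
        unfolding \<gamma>_s by blast
    qed
  next
    assume "\<forall>c. residual (sin s) (cos s) (cos R) (f1 s) (f2 s) D1 D2 H c = 0"
    then show "\<forall>x\<in>sphere 0 1. sdist p x = R \<longrightarrow> x \<noteq> y \<longrightarrow> ?identity x"
      using pointwise by blast
  qed
qed

lemma smooth_on_has_real_derivative:
  assumes "smooth_on S f" "x \<in> S"
  shows "(f has_real_derivative deriv f x) (at x)"
proof -
  have "((deriv ^^ 0) f has_real_derivative (deriv ^^ Suc 0) f x) (at x)"
    using assms unfolding smooth_on_def by blast
  then show ?thesis
    by simp
qed

theorem lemma3p3:
  fixes p y :: "'a::euclidean_space"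
    and \<gamma> :: "real \<Rightarrow> 'a"
    and R :: real
    and h f1 f2 :: "real \<Rightarrow> real"
  assumes dim: "DIM('a) \<ge> 3"
    and p: "p \<in> sphere 0 1"
    and R: "0 < R" "R < pi / 2"
    and y: "y \<in> sphere 0 1" "sdist p y = R"
    and \<gamma>_sphere: "\<gamma> ` {R..pi} \<subseteq> sphere 0 1"
    and \<gamma>_ends: "\<gamma> R = y" "\<gamma> pi = - p"
    and \<gamma>_geod: "\<forall>s\<in>{R..pi}. \<forall>t\<in>{R..pi}. sdist (\<gamma> s) (\<gamma> t) = \<bar>s - t\<bar>"
    and \<gamma>_dist: "\<forall>s\<in>{R..pi}. sdist p (\<gamma> s) = s"
    and smooth: "smooth_on {R<..<pi} h" "smooth_on {R<..<pi} f1" "smooth_on {R<..<pi} f2"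
  shows "(\<forall>x\<in>sphere 0 1. sdist p x = R \<longrightarrow> x \<noteq> y \<longrightarrow> (\<forall>s\<in>{R<..<pi}.
            ((\<lambda>t. f1 t * sin t ^ 4 / (1 - cos (sdist x (\<gamma> t))) ^ 1
                   + f2 t * sin t ^ 4 / (1 - cos (sdist x (\<gamma> t))) ^ 2)
             has_real_derivative
               (- 15 * sin R * (Psi6 (\<gamma> s) x \<bullet> grad_d p x) * h s - 3 * cos R * h s)) (at s)))
     \<longleftrightarrow>
     (\<forall>s\<in>{R<..<pi}. h s = f2 s * sin s ^ 3 \<and>
        (f1 has_real_derivative ((- 3 * cos s * f1 s + 3 * cos s * f2 s) / sin s)) (at s) \<and>
        (f2 has_real_derivative (((cos R - cos s) * f1 s + (cos s - cos R) * f2 s) / sin s)) (at s))"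
    (is "(\<forall>x\<in>sphere 0 1. sdist p x = R \<longrightarrow> x \<noteq> y \<longrightarrow> (\<forall>s\<in>{R<..<pi}. ?identity x s))
      \<longleftrightarrow> (\<forall>s\<in>{R<..<pi}. ?ode s)")
proof -
  have "norm p = 1" "R < pi"
    using p R by simp_all
  then obtain e where e: "norm e = 1" "p \<bullet> e = 0"
    and \<gamma>_eq: "\<forall>t\<in>{R..pi}. \<gamma> t = cos t *\<^sub>R p + sin t *\<^sub>R e"
    using geodesic_eq_cos_sin R(1) \<gamma>_sphere \<gamma>_geod \<gamma>_dist by blast
  have "y = cos R *\<^sub>R p + sin R *\<^sub>R e" "\<forall>t\<in>{R<..<pi}. \<gamma> t = cos t *\<^sub>R p + sin t *\<^sub>R e"
    using \<gamma>_eq \<gamma>_ends(1) R(1) \<open>R < pi\<close> by auto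
  note identity_iff = identity_on_boundary_iff_residual_eq_0[OF dim \<open>norm p = 1\<close> e R(1) \<open>R < pi\<close> this]
  have "(\<forall>x\<in>sphere 0 1. sdist p x = R \<longrightarrow> x \<noteq> y \<longrightarrow> ?identity x s) \<longleftrightarrow> ?ode s"
    if s: "s \<in> {R<..<pi}" for s
  proof -
    note f' = smooth_on_has_real_derivative[OF smooth(2) s] smooth_on_has_real_derivative[OF smooth(3) s]
    have "sin s \<noteq> 0" "cos s \<noteq> cos R"
      using s R sin_gt_zero[of s] cos_inj_pi[of s R] by auto
    from identity_iff[OF s f', where H = "h s"] residual_eq_0_iff_ode[OF this]
    have "(\<forall>x\<in>sphere 0 1. sdist p x = R \<longrightarrow> x \<noteq> y \<longrightarrow> ?identity x s) \<longleftrightarrow>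
        h s = f2 s * sin s ^ 3 \<and> deriv f1 s = (- 3 * cos s * f1 s + 3 * cos s * f2 s) / sin s
        \<and> deriv f2 s = ((cos R - cos s) * f1 s + (cos s - cos R) * f2 s) / sin s"
      by (rule trans)
    also have "\<dots> \<longleftrightarrow> ?ode s"
      using f' DERIV_unique by metis
    finally show ?thesis .
  qed
  then show ?thesis
    by blast
qed

end
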